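(* For $x>0$ let $q=e^{-2\pi x}$ and $\eta(ix)=q^{1/24}\prod_{n=1}^\infty(1-q^n)$. Then for every $s>0$, $$\int_0^\infty e^{-sx}\,\eta(ix)\,dx=\sqrt{\frac{\pi}{s}}\;\frac{\sinh\big(2\sqrt{\pi s/3}\big)}{\cosh\big(\sqrt{3\pi s}\big)}.$$
   Context: $\eta$ is the Dedekind eta function, evaluated on the positive imaginary axis. *)

theory Defs
  imports "HOL-Analysis.Analysis"
begin

definition eta_imag :: "real \<Rightarrow> real" where
  "eta_imag x = (let q = exp (- 2 * pi * x) in
      q powr (1/24) * (\<Prod>n. (1 - q ^ Suc n)))"

end

theory Submission
  imports Defs
begin

text \<open>
  Euler's pentagonal number theorem turns \<open>eta(ix)\<close> into the alternating series
  \<open>\<Sum>m. (-1)^m (exp (-\<alpha>\<^sub>m x) - exp (-\<beta>\<^sub>m x))\<close> with \<open>\<alpha>\<^sub>m = \<pi> (6m+1)\<^sup>2 / 12\<close> and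
  \<open>\<beta>\<^sub>m = \<pi> (6m+5)\<^sup>2 / 12\<close>. It is dominated well enough to be integrated termwise, so the
  Laplace transform is \<open>\<Sum>m. (-1)^m (1 / (s + \<alpha>\<^sub>m) - 1 / (s + \<beta>\<^sub>m))\<close>. Grouping the terms in
  pairs gives the difference of the lattice sums \<open>\<Sum>k\<in>\<int>. 1 / ((k + a)\<^sup>2 + b\<^sup>2)\<close> at
  \<open>a = 1/12\<close> and \<open>a = 5/12\<close>, and these are the imaginary parts of the partial fraction
  expansion of \<open>\<pi> cot (\<pi> z)\<close> at \<open>z = a + ib\<close>, which follows from the reflection formula
  for the digamma function.
\<close>

section \<open>Euler's pentagonal number theorem\<close>

fun triangular :: "nat \<Rightarrow> nat" where
  "triangular 0 = 0"
| "triangular (Suc j) = triangular j + Suc j"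

lemma real_triangular: "real (triangular m) = real m * (real m + 1) / 2"
  by (induction m) (simp_all add: field_simps)

definition tail_prod :: "'a::comm_ring_1 \<Rightarrow> nat \<Rightarrow> nat \<Rightarrow> 'a" where
  "tail_prod q N j = (\<Prod>k\<in>{Suc j..N}. 1 - q ^ k)"

text \<open>
  A finite form of the pentagonal theorem: its \<open>j = 0\<close> term is a partial product, the other
  terms are \<open>O(N q\<^sup>N)\<close>, and \<open>shanks_sum_eq\<close> identifies it with a partial pentagonal sum.
\<close>
definition shanks_sum :: "'a::comm_ring_1 \<Rightarrow> nat \<Rightarrow> 'a" where
  "shanks_sum q N = (\<Sum>j\<le>N. (-1) ^ j * tail_prod q N j * q ^ (j * N + triangular j))"

text \<open>The exponents are the generalized pentagonal numbers \<open>m(3m+1)/2\<close> and \<open>(m+1)(3m+2)/2\<close>.\<close>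
definition pentagonal_term :: "'a::comm_ring_1 \<Rightarrow> nat \<Rightarrow> 'a" where
  "pentagonal_term q m = (-1) ^ m * (q ^ (m\<^sup>2 + triangular m) - q ^ ((m + 1)\<^sup>2 + triangular m))"

lemma tail_prod_Suc_right: "j \<le> N \<Longrightarrow> tail_prod q (Suc N) j = tail_prod q N j * (1 - q ^ Suc N)"
  unfolding tail_prod_def by simp

lemma tail_prod_Suc_left: "j < N \<Longrightarrow> tail_prod q N j = (1 - q ^ Suc j) * tail_prod q N (Suc j)"
  unfolding tail_prod_def by (subst prod.atLeast_Suc_atMost) auto

lemma tail_prod_self [simp]: "tail_prod q N N = 1"
  unfolding tail_prod_def by simp

lemma shanks_sum_Suc:
  "shanks_sum q (Suc N) = shanks_sum q N
     + (-1) ^ Suc N * (q ^ ((N + 1)\<^sup>2 + triangular N) + q ^ ((N + 1)\<^sup>2 + triangular (N + 1)))"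
proof -
  define t where "t M j = (-1) ^ j * tail_prod q M j * q ^ (j * M + triangular j)" for M j
  define g where "g j = (-1) ^ j * tail_prod q N j * (1 - q ^ j) * q ^ (j * N + triangular j)" for j
  have telescoping: "t (Suc N) j - t N j = g (Suc j) - g j" if "j < N" for j
  proof -
    have "q ^ (j * Suc N + triangular j) = q ^ (j * N + triangular j) * q ^ j"
      and "q ^ (Suc j * N + triangular (Suc j)) = q ^ (j * N + triangular j) * q ^ (N + j + 1)"
      by (simp_all add: power_add algebra_simps)
    with that show ?thesis
      unfolding t_def g_def
      by (simp add: tail_prod_Suc_right tail_prod_Suc_left[OF that] power_add algebra_simps)
  qed
  have last: "t (Suc N) N - t N N = - g N - (-1) ^ N * q ^ ((N + 1)\<^sup>2 + triangular N)"
    unfolding t_def g_def by (simp add: tail_prod_Suc_right power_add power2_eq_square algebra_simps)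
  have "shanks_sum q (Suc N) = (\<Sum>j\<le>N. t (Suc N) j) + t (Suc N) (Suc N)"
    unfolding shanks_sum_def t_def by simp
  also have "(\<Sum>j\<le>N. t (Suc N) j)
      = shanks_sum q N + (\<Sum>j<N. t (Suc N) j - t N j) + (t (Suc N) N - t N N)"
    by (simp add: shanks_sum_def t_def[symmetric] lessThan_Suc_atMost[symmetric] sum_subtractf)
  also have "(\<Sum>j<N. t (Suc N) j - t N j) = g N - g 0"
    by (simp add: telescoping sum_lessThan_telescope)
  finally show ?thesis
    using last by (simp add: g_def t_def tail_prod_Suc_right power2_eq_square power_add algebra_simps)
qed

lemma shanks_sum_eq:
  "shanks_sum q N = (\<Sum>m<N. pentagonal_term q m) + (-1) ^ N * q ^ (N\<^sup>2 + triangular N)"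
proof (induction N)
  case 0
  show ?case by (simp add: shanks_sum_def)
next
  case (Suc N)
  show ?case by (simp add: shanks_sum_Suc Suc.IH pentagonal_term_def algebra_simps)
qed

lemma le_square_plus_triangular [simp]: "m \<le> m * m + triangular m"
  using le_square[of m] by linarith

lemma abs_pentagonal_term_le:
  fixes q :: real
  assumes "0 \<le> q" "q < 1"
  shows "\<bar>pentagonal_term q m\<bar> \<le> q ^ m"
proof -
  have "q ^ ((m + 1)\<^sup>2 + triangular m) \<le> q ^ (m\<^sup>2 + triangular m)"
    using assms by (intro power_decreasing) (auto simp: power2_eq_square)
  moreover have "q ^ (m\<^sup>2 + triangular m) \<le> q ^ m"
    using assms by (intro power_decreasing) (auto simp: power2_eq_square)
  moreover have "0 \<le> q ^ ((m + 1)\<^sup>2 + triangular m)"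
    using assms by simp
  ultimately show ?thesis
    by (simp add: pentagonal_term_def abs_mult)
qed

lemma summable_pentagonal_term:
  fixes q :: real
  assumes "0 \<le> q" "q < 1"
  shows "summable (pentagonal_term q)"
  by (rule summable_comparison_test[of _ "\<lambda>m. q ^ m"])
    (use assms abs_pentagonal_term_le in \<open>auto intro!: summable_geometric\<close>)

lemma tail_prod_bounds:
  fixes q :: real
  assumes "0 \<le> q" "q < 1"
  shows "0 \<le> tail_prod q N j" "tail_prod q N j \<le> 1"
  using assms unfolding tail_prod_def by (auto intro!: prod_nonneg prod_le_1 simp: power_le_one)

lemma abs_shanks_sum_minus_tail_prod_le:
  fixes q :: real
  assumes "0 \<le> q" "q < 1"
  shows "\<bar>shanks_sum q N - tail_prod q N 0\<bar> \<le> real N * q ^ N"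
proof -
  have "shanks_sum q N - tail_prod q N 0 = (\<Sum>j\<in>{1..N}. (-1) ^ j * tail_prod q N j * q ^ (j * N + triangular j))"
    unfolding shanks_sum_def by (simp add: atMost_atLeast0 sum.atLeast_Suc_atMost)
  also have "\<bar>\<dots>\<bar> \<le> (\<Sum>j\<in>{1..N}. q ^ N)"
  proof (rule order.trans[OF sum_abs sum_mono])
    fix j assume "j \<in> {1..N}"
    then have "q ^ (j * N + triangular j) \<le> q ^ N"
      using assms by (intro power_decreasing) (auto simp: trans_le_add1)
    moreover have "\<bar>(-1) ^ j * tail_prod q N j * q ^ (j * N + triangular j)\<bar> \<le> q ^ (j * N + triangular j)"
      using tail_prod_bounds[OF assms, of N j] assms
      by (simp add: abs_mult mult_left_le_one_le)
    ultimately show "\<bar>(-1) ^ j * tail_prod q N j * q ^ (j * N + triangular j)\<bar> \<le> q ^ N"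
      by linarith
  qed
  finally show ?thesis by simp
qed

theorem euler_pentagonal:
  fixes q :: real
  assumes "0 \<le> q" "q < 1"
  shows "(\<Prod>n. 1 - q ^ Suc n) = (\<Sum>m. pentagonal_term q m)"
proof -
  have partial_sums: "(\<lambda>N. shanks_sum q N - (-1) ^ N * q ^ (N\<^sup>2 + triangular N)) \<longlonglongrightarrow> (\<Sum>m. pentagonal_term q m)"
    unfolding shanks_sum_eq using summable_LIMSEQ[OF summable_pentagonal_term[OF assms]] by simp
  have remainder: "(\<lambda>N. (-1) ^ N * q ^ (N\<^sup>2 + triangular N)) \<longlonglongrightarrow> 0"
  proof (rule Lim_null_comparison)
    show "\<forall>\<^sub>F N in sequentially. norm ((-1) ^ N * q ^ (N\<^sup>2 + triangular N)) \<le> q ^ N"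
      using assms by (intro always_eventually allI)
        (auto simp: abs_mult power_abs power2_eq_square intro!: power_decreasing)
    show "(\<lambda>N. q ^ N) \<longlonglongrightarrow> 0"
      using assms by (intro LIMSEQ_power_zero) auto
  qed
  have shanks_tail: "(\<lambda>N. shanks_sum q N - tail_prod q N 0) \<longlonglongrightarrow> 0"
  proof (rule Lim_null_comparison)
    show "\<forall>\<^sub>F N in sequentially. norm (shanks_sum q N - tail_prod q N 0) \<le> real N * q ^ N"
      using abs_shanks_sum_minus_tail_prod_le[OF assms] by simp
    show "(\<lambda>N. real N * q ^ N) \<longlonglongrightarrow> 0"
      using assms by (intro powser_times_n_limit_0) auto
  qed
  have "(\<lambda>N. (shanks_sum q N - (-1) ^ N * q ^ (N\<^sup>2 + triangular N)) + (-1) ^ N * q ^ (N\<^sup>2 + triangular N)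
          - (shanks_sum q N - tail_prod q N 0)) \<longlonglongrightarrow> (\<Sum>m. pentagonal_term q m) + 0 - 0"
    using partial_sums remainder shanks_tail by (rule tendsto_diff[OF tendsto_add])
  then have "(\<lambda>N. tail_prod q N 0) \<longlonglongrightarrow> (\<Sum>m. pentagonal_term q m)"
    by simp
  then have to_sum: "(\<lambda>N. tail_prod q (Suc N) 0) \<longlonglongrightarrow> (\<Sum>m. pentagonal_term q m)"
    by (rule LIMSEQ_Suc)
  have "convergent_prod (\<lambda>n. 1 + - (q ^ Suc n))"
  proof (rule summable_imp_convergent_prod_real)
    show "summable (\<lambda>n. \<bar>- (q ^ Suc n)\<bar>)"
      using assms by (simp add: summable_geometric)
    show "- (q ^ Suc n) \<noteq> - 1" for n
      using assms power_decreasing[of 1 "Suc n" q] by auto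
  qed
  then have "(\<lambda>N. \<Prod>n\<le>N. 1 - q ^ Suc n) \<longlonglongrightarrow> (\<Prod>n. 1 - q ^ Suc n)"
    by (intro convergent_prod_LIMSEQ) simp
  also have "(\<lambda>N. \<Prod>n\<le>N. 1 - q ^ Suc n) = (\<lambda>N. tail_prod q (Suc N) 0)"
    unfolding tail_prod_def prod.atLeast_Suc_atMost_Suc_shift by (simp add: atMost_atLeast0)
  finally show ?thesis
    using to_sum by (rule LIMSEQ_unique)
qed

section \<open>Termwise Laplace transform of an alternating exponential series\<close>

lemma has_integral_exp_minus_pos:
  assumes "(c::real) > 0"
  shows "((\<lambda>x. exp (- c * x)) has_integral 1 / c) {0<..}"
proof -
  have "((\<lambda>x. exp (- c * x)) has_integral exp (- c * 0) / c) {0..}"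
    using assms by (rule has_integral_exp_minus_to_infinity)
  then show ?thesis
    by (subst has_integral_spike_set_eq[of "{0<..}" "{0..}"])
       (auto intro: negligible_subset[OF negligible_sing[of 0]])
qed

lemma set_integral_exp_minus_pos:
  assumes "(c::real) > 0"
  shows "set_integrable lebesgue {0<..} (\<lambda>x. exp (- c * x))"
    and "(LINT x:{0<..}|lebesgue. exp (- c * x)) = 1 / c"
proof -
  have c: "((\<lambda>x. exp (- c * x)) has_integral 1 / c) {0<..}"
    using assms by (rule has_integral_exp_minus_pos)
  show integrable: "set_integrable lebesgue {0<..} (\<lambda>x. exp (- c * x))"
    using c by (intro nonnegative_absolutely_integrable_1) (auto simp: integrable_on_def)
  show "(LINT x:{0<..}|lebesgue. exp (- c * x)) = 1 / c"
    using set_lebesgue_integral_eq_integral(2)[OF integrable] c by (simp add: integral_unique)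
qed

lemma has_integral_alternating_exp_series:
  fixes a b :: "nat \<Rightarrow> real"
  assumes pos: "\<And>m. 0 < a m" and le: "\<And>m. a m \<le> b m"
    and summable_coeffs: "summable (\<lambda>m. 1 / a m - 1 / b m)"
    and summable_exp: "\<And>x. 0 < x \<Longrightarrow> summable (\<lambda>m. exp (- a m * x))"
  shows "((\<lambda>x. \<Sum>m. (-1) ^ m * (exp (- a m * x) - exp (- b m * x))) has_integral
           (\<Sum>m. (-1) ^ m * (1 / a m - 1 / b m))) {0<..}"
proof -
  \<comment> \<open>Cut off by the indicator of \<open>{0<..}\<close>, the terms become Lebesgue integrable on the whole
    line, where \<open>integrable_suminf\<close> allows termwise integration.\<close>
  define E where "E c x = indicator {0<..} x * exp (- c * x)" for c x :: real
  define F where "F m x = (-1) ^ m * (E (a m) x - E (b m) x)" for m x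
  have b_pos: "0 < b m" for m
    using pos[of m] le[of m] by linarith
  have E_integrable: "integrable lebesgue (E c)" and E_integral: "(\<integral>x. E c x \<partial>lebesgue) = 1 / c"
    if "c > 0" for c
    using set_integral_exp_minus_pos[OF that]
    unfolding set_integrable_def set_lebesgue_integral_def E_def by auto
  have E_mono: "E (b m) x \<le> E (a m) x" for m x
    using le[of m] by (auto simp: E_def indicator_def mult_right_mono)
  have F_integrable: "integrable lebesgue (F m)" for m
    unfolding F_def using E_integrable pos b_pos by auto
  have F_integral: "(\<integral>x. F m x \<partial>lebesgue) = (-1) ^ m * (1 / a m - 1 / b m)" for m
    unfolding F_def using E_integrable E_integral pos b_pos by simp
  have abs_F: "\<bar>F m x\<bar> = E (a m) x - E (b m) x" for m x
    using E_mono[of m x] by (simp add: F_def abs_mult)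
  have "summable (\<lambda>m. \<integral>x. norm (F m x) \<partial>lebesgue)"
    using E_integrable E_integral pos b_pos summable_coeffs by (simp add: abs_F)
  moreover have "AE x in lebesgue. summable (\<lambda>m. norm (F m x))"
  proof (rule AE_I2)
    fix x :: real
    show "summable (\<lambda>m. norm (F m x))"
    proof (cases "0 < x")
      case True
      have bound: "norm (norm (F m x)) \<le> exp (- a m * x)" for m
      proof -
        have "norm (norm (F m x)) = \<bar>F m x\<bar>"
          by simp
        also have "\<dots> = E (a m) x - E (b m) x"
          by (rule abs_F)
        also have "\<dots> \<le> exp (- a m * x)"
          using True by (simp add: E_def)
        finally show ?thesis .
      qed
      show ?thesis
        by (rule summable_comparison_test'[OF summable_exp[OF True]], rule bound)
    qed (simp add: F_def E_def)
  qed
  ultimately have "integrable lebesgue (\<lambda>x. \<Sum>m. F m x)"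
    and sums: "(\<lambda>m. \<integral>x. F m x \<partial>lebesgue) sums (\<integral>x. (\<Sum>m. F m x) \<partial>lebesgue)"
    using integrable_suminf sums_integral F_integrable by blast+
  then have "((\<lambda>x. \<Sum>m. F m x) has_integral (\<Sum>m. (-1) ^ m * (1 / a m - 1 / b m))) UNIV"
    using sums F_integral by (simp add: sums_iff has_integral_integral_lebesgue)
  moreover have "(\<lambda>x. \<Sum>m. F m x) =
      (\<lambda>x. if x \<in> {0<..} then \<Sum>m. (-1) ^ m * (exp (- a m * x) - exp (- b m * x)) else 0)"
    by (auto simp: F_def E_def)
  ultimately show ?thesis
    by (simp only: has_integral_restrict_UNIV)
qed

section \<open>Partial fractions of the cotangent\<close>

lemma Digamma_reflection_complex:
  fixes z :: complex
  assumes "z \<notin> \<int>"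
  shows "Digamma (1 - z) - Digamma z = of_real pi * cot (of_real pi * z)"
proof -
  have "1 - z \<notin> \<int>"
    using assms Ints_diff[of 1 "1 - z"] by auto
  then have not_poles: "z \<notin> \<int>\<^sub>\<le>\<^sub>0" "1 - z \<notin> \<int>\<^sub>\<le>\<^sub>0"
    using assms nonpos_Ints_subset_Ints by auto
  have sin_nz: "sin (of_real pi * z) \<noteq> 0"
    using assms by (auto simp: sin_eq_0 Ints_of_int)
  have "((\<lambda>w. Gamma w * Gamma (1 - w)) has_field_derivative
          Gamma z * Gamma (1 - z) * (Digamma z - Digamma (1 - z))) (at z)"
    using not_poles by (auto intro!: derivative_eq_intros simp: algebra_simps)
  moreover have "((\<lambda>w. Gamma w * Gamma (1 - w)) has_field_derivative
          - of_real pi * (of_real pi * cos (of_real pi * z)) / sin (of_real pi * z) ^ 2) (at z)"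
    unfolding Gamma_reflection_complex using sin_nz
    by (auto intro!: derivative_eq_intros simp: power2_eq_square)
  ultimately have derivatives: "of_real pi / sin (of_real pi * z) * (Digamma z - Digamma (1 - z))
      = - of_real pi * (of_real pi * cos (of_real pi * z)) / sin (of_real pi * z) ^ 2"
    unfolding Gamma_reflection_complex by (rule DERIV_unique)
  have "Digamma (1 - z) - Digamma z = - (sin (of_real pi * z) / of_real pi) *
          (of_real pi / sin (of_real pi * z) * (Digamma z - Digamma (1 - z)))"
    using sin_nz by (simp add: field_simps)
  also have "\<dots> = of_real pi * cos (of_real pi * z) / sin (of_real pi * z)"
    unfolding derivatives using sin_nz by (simp add: field_simps power2_eq_square)
  finally show ?thesis
    by (simp add: cot_def)
qed

lemma cot_partial_fractions:
  fixes z :: complex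
  assumes "z \<notin> \<int>"
  shows "(\<lambda>k. 1 / (z + of_nat k) - 1 / (of_nat k + 1 - z)) sums (of_real pi * cot (of_real pi * z))"
proof -
  have "z \<noteq> 0" "1 - z \<noteq> 0"
    using assms by auto
  note summable = summable_Digamma[OF this(1)] summable_Digamma[OF this(2)]
  have "(\<lambda>k. (inverse (of_nat (Suc k)) - inverse (1 - z + of_nat k))
               - (inverse (of_nat (Suc k)) - inverse (z + of_nat k))) sums
             ((Digamma (1 - z) + euler_mascheroni) - (Digamma z + euler_mascheroni))"
    unfolding Digamma_def diff_add_cancel using summable by (intro sums_diff summable_sums)
  then show ?thesis
    using Digamma_reflection_complex[OF assms] by (simp add: divide_inverse algebra_simps)
qed

lemma Im_cot: "Im (cot z) = - sinh (2 * Im z) / (cosh (2 * Im z) - cos (2 * Re z))"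
proof -
  define x y where "x = Re z" and "y = Im z"
  have parts: "Re (sin z) = sin x * cosh y" "Im (sin z) = cos x * sinh y"
    "Re (cos z) = cos x * cosh y" "Im (cos z) = - (sin x * sinh y)"
    by (simp_all add: x_def y_def Re_sin Im_sin Re_cos Im_cos sinh_def cosh_def exp_minus field_simps)
  have "(sin x * cosh y)\<^sup>2 + (cos x * sinh y)\<^sup>2 = (sinh y)\<^sup>2 + (sin x)\<^sup>2"
    by (simp add: cosh_square_eq power_mult_distrib cos_squared_eq algebra_simps)
  also have "\<dots> = (cosh (2 * y) - cos (2 * x)) / 2"
    by (simp add: cosh_double cosh_square_eq cos_double_sin)
  finally have denominator: "(sin x * cosh y)\<^sup>2 + (cos x * sinh y)\<^sup>2 = (cosh (2 * y) - cos (2 * x)) / 2" .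
  have numerator: "- (sin x * sinh y) * (sin x * cosh y) - cos x * cosh y * (cos x * sinh y)
      = - sinh (2 * y) / 2"
    using sin_cos_squared_add[of x] unfolding sinh_double by algebra
  have "Im (cot z) = (Im (cos z) * Re (sin z) - Re (cos z) * Im (sin z)) / ((Re (sin z))\<^sup>2 + (Im (sin z))\<^sup>2)"
    by (simp add: cot_def Im_divide)
  also have "\<dots> = (- sinh (2 * y) / 2) / ((cosh (2 * y) - cos (2 * x)) / 2)"
    unfolding parts numerator denominator ..
  finally show ?thesis
    by (simp add: x_def y_def)
qed

lemma sums_inverse_shifted_squares:
  fixes a b :: real
  assumes "b \<noteq> 0"
  shows "(\<lambda>k. 1 / ((real k + a)\<^sup>2 + b\<^sup>2) + 1 / ((real k + 1 - a)\<^sup>2 + b\<^sup>2))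
           sums (pi / b * sinh (2 * pi * b) / (cosh (2 * pi * b) - cos (2 * pi * a)))"
proof -
  define T where "T k = 1 / ((real k + a)\<^sup>2 + b\<^sup>2) + 1 / ((real k + 1 - a)\<^sup>2 + b\<^sup>2)" for k
  define z where "z = Complex a b"
  have "z \<notin> \<int>"
    using assms by (auto simp: z_def complex_eq_iff elim!: Ints_cases)
  from sums_Im[OF cot_partial_fractions[OF this]]
  have "(\<lambda>k. - b * T k) sums (- pi * sinh (2 * pi * b) / (cosh (2 * pi * b) - cos (2 * pi * a)))"
    by (simp add: T_def z_def Im_divide Im_cot algebra_simps)
  from sums_mult[OF this, of "- 1 / b"] show ?thesis
    using assms by (simp add: T_def[symmetric])
qed

section \<open>The Laplace transform of \<open>eta(ix)\<close>\<close>

definition eta_exp_lo :: "nat \<Rightarrow> real" where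
  "eta_exp_lo m = pi * (6 * real m + 1)\<^sup>2 / 12"

definition eta_exp_hi :: "nat \<Rightarrow> real" where
  "eta_exp_hi m = pi * (6 * real m + 5)\<^sup>2 / 12"

lemma eta_exp_lo_pos: "0 < eta_exp_lo m"
  by (simp add: eta_exp_lo_def)

lemma eta_exp_lo_le_hi: "eta_exp_lo m \<le> eta_exp_hi m"
  by (simp add: eta_exp_lo_def eta_exp_hi_def power_mono)

lemma pi_times_le_eta_exp_lo: "pi * real m \<le> eta_exp_lo m"
proof -
  have "12 * real m \<le> (6 * real m + 1)\<^sup>2"
    by (simp add: power2_eq_square algebra_simps)
  then show ?thesis
    by (simp add: eta_exp_lo_def)
qed

lemma sums_eta_imag:
  assumes "0 < x"
  shows "(\<lambda>m. (-1) ^ m * (exp (- eta_exp_lo m * x) - exp (- eta_exp_hi m * x))) sums eta_imag x"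
proof -
  define q where "q = exp (- 2 * pi * x)"
  have q: "0 \<le> q" "q < 1"
    using assms by (auto simp: q_def)
  have power_q: "q powr (1/24) * q ^ n = exp (- 2 * pi * x * (1/24 + real n))" for n
    by (simp add: q_def powr_def exp_of_nat_mult[symmetric] exp_add[symmetric] algebra_simps)
  have "q powr (1/24) * pentagonal_term q m
      = (-1) ^ m * (exp (- eta_exp_lo m * x) - exp (- eta_exp_hi m * x))" for m
  proof -
    have "1/24 + real (m\<^sup>2 + triangular m) = (6 * real m + 1)\<^sup>2 / 24"
      and "1/24 + real ((m + 1)\<^sup>2 + triangular m) = (6 * real m + 5)\<^sup>2 / 24"
      by (simp_all add: real_triangular power2_eq_square field_simps)
    then show ?thesis
      unfolding pentagonal_term_def eta_exp_lo_def eta_exp_hi_def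
      by (simp only: right_diff_distrib mult.left_commute[of "q powr (1/24)"] power_q)
         (simp add: algebra_simps)
  qed
  moreover have "(\<lambda>m. q powr (1/24) * pentagonal_term q m) sums eta_imag x"
    unfolding eta_imag_def Let_def q_def[symmetric] euler_pentagonal[OF q]
    by (intro sums_mult summable_sums summable_pentagonal_term q)
  ultimately show ?thesis
    by simp
qed

lemma summable_exp_minus_eta_exp_lo:
  assumes "0 \<le> s" "0 < x"
  shows "summable (\<lambda>m. exp (- (s + eta_exp_lo m) * x))"
proof (rule summable_comparison_test'[OF summable_geometric[of "exp (- pi * x)"]])
  show "norm (exp (- pi * x)) < 1"
    using assms by simp
  show "norm (exp (- (s + eta_exp_lo m) * x)) \<le> exp (- pi * x) ^ m" for m
  proof -
    have "pi * real m * x \<le> (s + eta_exp_lo m) * x"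
      using assms pi_times_le_eta_exp_lo[of m] by (intro mult_right_mono) auto
    then show ?thesis
      by (simp add: exp_of_nat_mult[symmetric] algebra_simps)
  qed
qed

lemma summable_diff_inverse_eta_exp:
  assumes "0 \<le> s"
  shows "summable (\<lambda>m. 1 / (s + eta_exp_lo m) - 1 / (s + eta_exp_hi m))"
proof -
  have bound: "norm (1 / (s + eta_exp_lo m) - 1 / (s + eta_exp_hi m)) \<le> 12 / pi * (1 / (real m + 1)\<^sup>2)"
    for m
  proof -
    have pos: "0 < s + eta_exp_lo m" "s + eta_exp_lo m \<le> s + eta_exp_hi m"
      using assms eta_exp_lo_pos[of m] eta_exp_lo_le_hi[of m] by auto
    have "1 / (s + eta_exp_hi m) \<le> 1 / (s + eta_exp_lo m)" "0 \<le> 1 / (s + eta_exp_hi m)"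
      using pos by (simp_all add: frac_le)
    moreover have "1 / (s + eta_exp_lo m) \<le> 1 / eta_exp_lo m"
      using assms eta_exp_lo_pos[of m] by (simp add: frac_le)
    ultimately have "norm (1 / (s + eta_exp_lo m) - 1 / (s + eta_exp_hi m)) \<le> 1 / eta_exp_lo m"
      by (simp only: real_norm_def abs_le_iff) linarith
    also have "\<dots> \<le> 12 / pi * (1 / (real m + 1)\<^sup>2)"
      using power_mono[of "real m + 1" "6 * real m + 1" 2] by (simp add: eta_exp_lo_def field_simps)
    finally show ?thesis .
  qed
  have majorant: "summable (\<lambda>m. 12 / pi * (1 / (real m + 1)\<^sup>2))"
    using inverse_squares_sums by (intro summable_mult) (simp add: sums_iff add.commute)
  show ?thesis
    by (rule summable_comparison_test'[OF majorant], rule bound)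
qed

lemma cosh_treble_cosh: "cosh (3 * y) = 4 * cosh y ^ 3 - 3 * cosh (y::real)"
proof -
  have "cosh (3 * y) = cosh (2 * y) * cosh y + sinh (2 * y) * sinh y"
    using cosh_add[of "2 * y" y] by simp
  also have "\<dots> = (2 * (cosh y)\<^sup>2 - 1) * cosh y + 2 * cosh y * (sinh y)\<^sup>2"
    by (simp add: cosh_double_cosh sinh_double power2_eq_square)
  also have "\<dots> = 4 * cosh y ^ 3 - 3 * cosh y"
    unfolding sinh_square_eq by (simp add: power2_eq_square power3_eq_cube algebra_simps)
  finally show ?thesis .
qed

lemma sinh_div_cosh_minus_cos_sixths:
  fixes y :: real
  shows "sinh y / (cosh y - cos (pi / 6)) - sinh y / (cosh y - cos (5 * pi / 6))
         = 2 * sqrt 3 * (sinh (2 * y) / cosh (3 * y))"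
proof -
  define c where "c = cosh y"
  have "cos (5 * pi / 6) = - cos (pi / 6)"
    using cos_pi_minus[of "pi / 6"] by simp
  then have cosines: "cos (pi / 6) = sqrt 3 / 2" "cos (5 * pi / 6) = - (sqrt 3 / 2)"
    by (simp_all add: cos_30)
  have "1 \<le> c"
    by (simp add: c_def cosh_real_ge_1)
  moreover have "1 \<le> c\<^sup>2"
    using \<open>1 \<le> c\<close> by (rule one_le_power)
  moreover have "0 \<le> sqrt 3" "sqrt 3 < 2"
    using real_sqrt_less_iff[of 3 4] by simp_all
  ultimately have "c - sqrt 3 / 2 \<noteq> 0" "c + sqrt 3 / 2 \<noteq> 0" "4 * c\<^sup>2 - 3 \<noteq> 0" "c \<noteq> 0"
    by linarith+
  moreover have "sqrt 3 * sqrt 3 = 3"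
    by simp
  ultimately show ?thesis
    unfolding cosines sinh_double cosh_treble_cosh c_def[symmetric]
    by (simp add: field_simps power2_eq_square power3_eq_cube)
qed

definition eta_laplace_coeff :: "real \<Rightarrow> nat \<Rightarrow> real" where
  "eta_laplace_coeff s m = (-1) ^ m * (1 / (s + eta_exp_lo m) - 1 / (s + eta_exp_hi m))"

lemma eta_laplace_coeff_pair:
  assumes "s = 12 * pi * b\<^sup>2"
  shows "eta_laplace_coeff s (2 * l) + eta_laplace_coeff s (2 * l + 1) = 1 / (12 * pi) *
    ((1 / ((real l + 1 / 12)\<^sup>2 + b\<^sup>2) + 1 / ((real l + 1 - 1 / 12)\<^sup>2 + b\<^sup>2))
     - (1 / ((real l + 5 / 12)\<^sup>2 + b\<^sup>2) + 1 / ((real l + 1 - 5 / 12)\<^sup>2 + b\<^sup>2)))"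
proof -
  have "1 / (s + pi * (12 * real l + r)\<^sup>2 / 12) = 1 / (12 * pi) * (1 / ((real l + r / 12)\<^sup>2 + b\<^sup>2))"
    for r
    unfolding assms by (simp add: field_simps power2_eq_square)
  from this[of 1] this[of 5] this[of 7] this[of 11] show ?thesis
    by (simp add: eta_laplace_coeff_def eta_exp_lo_def eta_exp_hi_def algebra_simps)
qed

lemma sums_eta_laplace_coeff_pairs:
  assumes "0 < b" "s = 12 * pi * b\<^sup>2"
  shows "(\<lambda>l. eta_laplace_coeff s (2 * l) + eta_laplace_coeff s (2 * l + 1))
           sums (sqrt 3 / (6 * b) * (sinh (4 * pi * b) / cosh (6 * pi * b)))"
proof -
  define y where "y = 2 * pi * b"
  have "(\<lambda>l. 1 / ((real l + 1 / 12)\<^sup>2 + b\<^sup>2) + 1 / ((real l + 1 - 1 / 12)\<^sup>2 + b\<^sup>2))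
          sums (pi / b * sinh y / (cosh y - cos (pi / 6)))"
    and "(\<lambda>l. 1 / ((real l + 5 / 12)\<^sup>2 + b\<^sup>2) + 1 / ((real l + 1 - 5 / 12)\<^sup>2 + b\<^sup>2))
          sums (pi / b * sinh y / (cosh y - cos (5 * pi / 6)))"
    using sums_inverse_shifted_squares[of b "1 / 12"] sums_inverse_shifted_squares[of b "5 / 12"] assms(1)
    by (simp_all add: y_def mult.commute)
  from sums_mult[OF sums_diff[OF this], of "1 / (12 * pi)"]
  have "(\<lambda>l. eta_laplace_coeff s (2 * l) + eta_laplace_coeff s (2 * l + 1))
          sums (1 / (12 * pi) * (pi / b * (2 * sqrt 3 * (sinh (2 * y) / cosh (3 * y)))))"
    unfolding eta_laplace_coeff_pair[OF assms(2)] sinh_div_cosh_minus_cos_sixths[symmetric]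
      times_divide_eq_right[symmetric] right_diff_distrib[symmetric] .
  then show ?thesis
    using assms(1) by (simp add: y_def field_simps)
qed

lemma sums_eta_laplace_coeff:
  assumes "0 < s"
  shows "eta_laplace_coeff s sums (sqrt (pi / s) * sinh (2 * sqrt (pi * s / 3)) / cosh (sqrt (3 * pi * s)))"
proof -
  define y where "y = sqrt (pi * s / 3)"
  define b where "b = y / (2 * pi)"
  have y: "0 < y" "y\<^sup>2 = pi * s / 3"
    using assms by (simp_all add: y_def)
  then have b: "0 < b" "s = 12 * pi * b\<^sup>2"
    by (simp_all add: b_def power_divide power2_eq_square field_simps)
  have "norm (eta_laplace_coeff s m) = 1 / (s + eta_exp_lo m) - 1 / (s + eta_exp_hi m)" for m
  proof -
    have "1 / (s + eta_exp_hi m) \<le> 1 / (s + eta_exp_lo m)"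
      using assms eta_exp_lo_pos[of m] eta_exp_lo_le_hi[of m] by (intro divide_left_mono) auto
    then show ?thesis
      by (simp add: eta_laplace_coeff_def abs_mult)
  qed
  then have summable: "summable (eta_laplace_coeff s)"
    using summable_diff_inverse_eta_exp[of s] assms by (simp add: summable_norm_cancel)
  have "(\<lambda>l. sum (eta_laplace_coeff s) {l * 2..<l * 2 + 2}) sums (\<Sum>m. eta_laplace_coeff s m)"
    by (rule sums_group[OF summable_sums[OF summable]]) simp
  moreover have "sum (eta_laplace_coeff s) {l * 2..<l * 2 + 2}
      = eta_laplace_coeff s (2 * l) + eta_laplace_coeff s (2 * l + 1)" for l
    by (simp add: numeral_2_eq_2 mult.commute)
  ultimately have "eta_laplace_coeff s sums (sqrt 3 / (6 * b) * (sinh (4 * pi * b) / cosh (6 * pi * b)))"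
    using sums_eta_laplace_coeff_pairs[OF b] summable by (simp add: sums_iff)
  moreover have "sqrt 3 / (6 * b) = sqrt (pi / s)"
  proof -
    have "pi / s = (sqrt 3 / (6 * b))\<^sup>2"
      using b by (simp add: power_divide power_mult_distrib power2_eq_square field_simps)
    then show ?thesis
      using b(1) by simp
  qed
  moreover have "sqrt (3 * pi * s) = 3 * y"
  proof -
    have "3 * pi * s = (3 * y)\<^sup>2"
      using y by (simp add: power_mult_distrib)
    then show ?thesis
      using y(1) by (simp only: real_sqrt_abs)
  qed
  moreover have "4 * pi * b = 2 * y" "6 * pi * b = 3 * y"
    by (simp_all add: b_def)
  ultimately show ?thesis
    by (simp add: y_def)
qed

theorem mainTheorem6:
  fixes s :: real
  assumes "s > 0"
  shows "((\<lambda>x. exp (- s * x) * eta_imag x) has_integral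
           (sqrt (pi / s) * sinh (2 * sqrt (pi * s / 3)) / cosh (sqrt (3 * pi * s)))) {0<..}"
proof -
  define a b where "a m = s + eta_exp_lo m" and "b m = s + eta_exp_hi m" for m
  have series: "((\<lambda>x. \<Sum>m. (-1) ^ m * (exp (- a m * x) - exp (- b m * x))) has_integral
          (\<Sum>m. (-1) ^ m * (1 / a m - 1 / b m))) {0<..}"
  proof (rule has_integral_alternating_exp_series)
    show "0 < a m" "a m \<le> b m" for m
      using assms eta_exp_lo_pos[of m] eta_exp_lo_le_hi[of m] by (simp_all add: a_def b_def)
    show "summable (\<lambda>m. 1 / a m - 1 / b m)"
      using summable_diff_inverse_eta_exp assms by (simp add: a_def b_def)
    show "summable (\<lambda>m. exp (- a m * x))" if "0 < x" for x
      using summable_exp_minus_eta_exp_lo assms that by (simp add: a_def)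
  qed
  have series_value: "(\<Sum>m. (-1) ^ m * (1 / a m - 1 / b m))
      = sqrt (pi / s) * sinh (2 * sqrt (pi * s / 3)) / cosh (sqrt (3 * pi * s))"
    using sums_eta_laplace_coeff[OF assms] by (simp add: eta_laplace_coeff_def[abs_def] a_def b_def sums_iff)
  have integrand: "(\<Sum>m. (-1) ^ m * (exp (- a m * x) - exp (- b m * x))) = exp (- s * x) * eta_imag x"
    if "x \<in> {0<..}" for x
  proof -
    have terms: "exp (- s * x) * ((-1) ^ m * (exp (- eta_exp_lo m * x) - exp (- eta_exp_hi m * x)))
        = (-1) ^ m * (exp (- a m * x) - exp (- b m * x))" for m
      by (simp add: a_def b_def algebra_simps flip: exp_add)
    show ?thesis
      using sums_mult[OF sums_eta_imag, of x "exp (- s * x)"] that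
      unfolding terms by (simp add: sums_iff)
  qed
  show ?thesis
    using has_integral_eq[OF integrand series] unfolding series_value .
qed

end
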